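(* Let $k\ge2$ and $\alpha>5$ be real. For $i=1,\dots,k-1$ let $a(i),b(i),c(i),d(i)\in\mathbb{C}$ with $|a(i)|=|d(i)|=1$ and $|b(i)|=|c(i)|=\alpha$. Let $x_1,\dots,x_k\in\mathbb{C}$ with $x_1\neq0$ satisfy $$c(1)x_1+d(1)x_2=0,\qquad b(2)x_1+c(2)x_2+d(2)x_3=0,$$ and $a(l)x_{l-2}+b(l)x_{l-1}+c(l)x_l+d(l)x_{l+1}=0$ for $3\le l\le k-1$. Then $|x_{l+1}|\ge(\alpha-2)|x_l|$ for $l=1,2,\dots,k-1$. *)

theory Defs
  imports Complex_Main
begin

end

theory Submission
  imports Defs
begin

text \<open>Write \<open>n l = |x l|\<close>. Each recurrence has a unit coefficient at \<open>x (l + 1)\<close>, so the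
  triangle inequality gives \<open>n (l + 1) \<ge> \<alpha> n l - \<alpha> n (l - 1) - n (l - 2)\<close>. Once two consecutive
  ratios are at least \<open>\<alpha> - 2 \<ge> 3\<close>, the subtracted terms cost at most \<open>2 n l\<close>, so the ratio
  bound propagates by induction.\<close>

lemma norm_ge_of_unit_coeff_sum_eq_0:
  fixes p q r s u :: "'a :: real_normed_div_algebra"
  assumes "p + q + r + u * s = 0" and "norm u = 1"
  shows "norm s \<ge> norm r - norm q - norm p"
proof -
  have "u * s = - (p + q + r)"
    using assms(1) by (simp add: eq_neg_iff_add_eq_0 algebra_simps)
  then have "norm s = norm (p + q + r)"
    using assms(2) by (metis norm_minus_cancel norm_mult mult_1)
  moreover have "norm r \<le> norm (p + q + r) + norm q + norm p"
    using norm_triangle_ineq4[of "p + q + r" "p + q"] norm_triangle_ineq[of p q] by simp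
  ultimately show ?thesis by linarith
qed

lemma ratio_bound_step:
  fixes n0 n1 n2 n3 \<alpha> :: real
  assumes "\<alpha> \<ge> 5" and "n0 \<ge> 0" and "n1 \<ge> 0"
    and "n3 \<ge> \<alpha> * n2 - \<alpha> * n1 - n0"
    and "n2 \<ge> (\<alpha> - 2) * n1" and "n1 \<ge> (\<alpha> - 2) * n0"
  shows "n3 \<ge> (\<alpha> - 2) * n2"
proof -
  have "3 * n1 \<le> n2"
    using assms(5) mult_right_mono[of 3 "\<alpha> - 2" n1] assms(1,3) by linarith
  moreover have "3 * n0 \<le> n1"
    using assms(6) mult_right_mono[of 3 "\<alpha> - 2" n0] assms(1,2) by linarith
  moreover have "\<alpha> * n1 \<le> n2 + 2 * n1"
    using assms(5) by (simp add: algebra_simps)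
  ultimately show ?thesis
    using assms(2,4) by (simp add: algebra_simps)
qed

lemma ratio_bound_of_three_term_bound:
  fixes n :: "nat \<Rightarrow> real" and \<alpha> :: real
  assumes "\<alpha> \<ge> 5" and "\<And>l. n l \<ge> 0"
    and "n 1 \<ge> (\<alpha> - 2) * n 0" and "n 2 \<ge> (\<alpha> - 2) * n 1"
    and "\<And>l. 2 \<le> l \<Longrightarrow> l \<le> m \<Longrightarrow> n (l + 1) \<ge> \<alpha> * n l - \<alpha> * n (l - 1) - n (l - 2)"
  shows "l \<le> m \<Longrightarrow> n (l + 1) \<ge> (\<alpha> - 2) * n l"
proof (induction l rule: less_induct)
  case (less l)
  consider "l = 0" | "l = 1" | "l \<ge> 2" by linarith
  then show ?case
  proof cases
    case 3
    have "n l \<ge> (\<alpha> - 2) * n (l - 1)"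
      using less.IH[of "l - 1"] less.prems 3 by simp
    moreover have "n (l - 1) \<ge> (\<alpha> - 2) * n (l - 2)"
      using less.IH[of "l - 2"] less.prems 3 by (simp add: numeral_2_eq_2 Suc_diff_Suc)
    ultimately show ?thesis
      using ratio_bound_step assms(1,2,5) less.prems 3 by blast
  qed (use assms(3,4) in \<open>simp_all add: numeral_2_eq_2\<close>)
qed

theorem lemma4p1:
  fixes k :: nat and \<alpha> :: real and a b c d x :: "nat \<Rightarrow> complex"
  assumes "k \<ge> 2" and "\<alpha> > 5"
    and "\<And>i. 1 \<le> i \<Longrightarrow> i \<le> k - 1 \<Longrightarrow> norm (a i) = 1 \<and> norm (d i) = 1"
    and "\<And>i. 1 \<le> i \<Longrightarrow> i \<le> k - 1 \<Longrightarrow> norm (b i) = \<alpha> \<and> norm (c i) = \<alpha>"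
    and "x 1 \<noteq> 0"
    and "c 1 * x 1 + d 1 * x 2 = 0"
    and "k \<ge> 3 \<Longrightarrow> b 2 * x 1 + c 2 * x 2 + d 2 * x 3 = 0"
    and "\<And>l. 3 \<le> l \<Longrightarrow> l \<le> k - 1 \<Longrightarrow>
           a l * x (l - 2) + b l * x (l - 1) + c l * x l + d l * x (l + 1) = 0"
  shows "\<forall>l. 1 \<le> l \<and> l \<le> k - 1 \<longrightarrow> norm (x (l + 1)) \<ge> (\<alpha> - 2) * norm (x l)"
proof -
  \<comment> \<open>Setting \<open>n 0 = 0\<close> makes the equation at \<open>l = 2\<close> an instance of the general recurrence.\<close>
  define n where "n l = (if l = 0 then 0 else norm (x l))" for l
  have "norm (x 2) \<ge> \<alpha> * norm (x 1)"
    using norm_ge_of_unit_coeff_sum_eq_0[of 0 0 "c 1 * x 1" "d 1" "x 2"] assms(1,3,4,6)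
    by (simp add: norm_mult)
  then have start: "n 2 \<ge> (\<alpha> - 2) * n 1"
    unfolding n_def by (simp add: left_diff_distrib) (smt (verit) norm_ge_zero)
  have "n (l + 1) \<ge> \<alpha> * n l - \<alpha> * n (l - 1) - n (l - 2)" if "2 \<le> l" "l \<le> k - 1" for l
  proof (cases "l = 2")
    case True
    then show ?thesis
      using norm_ge_of_unit_coeff_sum_eq_0[of 0 "b 2 * x 1" "c 2 * x 2" "d 2" "x 3"]
        assms(3,4,7) that by (simp add: n_def norm_mult)
  next
    case False
    with that have "3 \<le> l" by simp
    then show ?thesis
      using norm_ge_of_unit_coeff_sum_eq_0[of "a l * x (l - 2)" "b l * x (l - 1)" "c l * x l"
          "d l" "x (l + 1)"] assms(3,4)[of l] assms(8)[of l] that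
      by (simp add: n_def norm_mult)
  qed
  then have "norm (x (l + 1)) \<ge> (\<alpha> - 2) * norm (x l)" if "1 \<le> l" "l \<le> k - 1" for l
    using ratio_bound_of_three_term_bound[of \<alpha> n "k - 1" l] assms(2) start that
    by (simp add: n_def)
  then show ?thesis
    by blast
qed

end
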